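(* Let $\mathcal{K}^{\langle\infty\rangle}$ be a planar unbounded simple nested fractal whose number of essential fixed points is $k=4$. Then $\mathcal{K}^{\langle\infty\rangle}$ has the good labelling property.
   Context: Setting: $L>1$, $N\ge2$, $\nu_1=0,\dots,\nu_N\in\mathbb{R}^2$, $\Psi_i(x)=x/L+\nu_i$, and $\mathcal{K}^{\langle 0\rangle}=\bigcup_i\Psi_i(\mathcal{K}^{\langle 0\rangle})$ is a planar simple nested fractal (essential fixed points $V_0^{\langle0\rangle}$: fixed points $x$ for which there are another fixed point $y$ and $\Psi_i\ne\Psi_j$ with $\Psi_i(x)=\Psi_j(y)$; open set condition, nesting, symmetry with respect to perpendicular bisectors of pairs of essential fixed points, connectivity); $k=\#V_0^{\langle0\rangle}$, and $V_0^{\langle0\rangle}$ spans a regular $k$-gon. $\mathcal{K}^{\langle M\rangle}=L^M\mathcal{K}^{\langle 0\rangle}$, $\mathcal{K}^{\langle\infty\rangle}=\bigcup_{M\ge0}\mathcal{K}^{\langle M\rangle}$. An $M$-complex is $\Delta_M=\mathcal{K}^{\langle M\rangle}+\nu_{\Delta_M}$ with $\nu_{\Delta_M}=\sum_{j=M+1}^{J}L^j\nu_{i_j}$ ($J\ge M+1$), vertex set $V(\Delta_M)=L^MV_0^{\langle0\rangle}+\nu_{\Delta_M}$; $V_M^{\langle M\rangle}=L^MV_0^{\langle0\rangle}$ and $V_M^{\langle\infty\rangle}$ is the union of all $V(\Delta_M)$. With $\mathcal{A}$ an alphabet of $k$ symbols and $\mathcal{R}_M$ the $k$ rotations about the barycenter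 of $\mathcal{K}^{\langle M\rangle}$ preserving $V_M^{\langle M\rangle}$, a good labelling function of order $M$ is $\ell_M:V_M^{\langle\infty\rangle}\to\mathcal{A}$, bijective on $V_M^{\langle M\rangle}$, such that for each $M$-complex $\Delta_M=\mathcal{K}^{\langle M\rangle}+\nu_{\Delta_M}$ there is $R_{\Delta_M}\in\mathcal{R}_M$ with $\ell_M(v)=\ell_M(R_{\Delta_M}(v-\nu_{\Delta_M}))$, $v\in V(\Delta_M)$. The good labelling property means that a good labelling function of some order $M\in\mathbb{Z}$ exists. *)

theory Defs
  imports "HOL-Analysis.Analysis"
begin

text \<open>The plane is modelled by the type complex. Indices of the similitudes range over 1..N.\<close>

definition psi :: "real \<Rightarrow> (nat \<Rightarrow> complex) \<Rightarrow> nat \<Rightarrow> complex \<Rightarrow> complex" where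
  "psi L \<nu> i x = x / of_real L + \<nu> i"

fun psiw :: "real \<Rightarrow> (nat \<Rightarrow> complex) \<Rightarrow> nat list \<Rightarrow> complex \<Rightarrow> complex" where
  "psiw L \<nu> [] = id"
| "psiw L \<nu> (i # w) = psi L \<nu> i \<circ> psiw L \<nu> w"

definition fixpts :: "real \<Rightarrow> nat \<Rightarrow> (nat \<Rightarrow> complex) \<Rightarrow> complex set" where
  "fixpts L N \<nu> = {x. \<exists>i\<in>{1..N}. psi L \<nu> i x = x}"

definition ess_fixpts :: "real \<Rightarrow> nat \<Rightarrow> (nat \<Rightarrow> complex) \<Rightarrow> complex set" where
  "ess_fixpts L N \<nu> = {x \<in> fixpts L N \<nu>. \<exists>y\<in>fixpts L N \<nu>. \<exists>i\<in>{1..N}. \<exists>j\<in>{1..N}.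
      psi L \<nu> i \<noteq> psi L \<nu> j \<and> psi L \<nu> i x = psi L \<nu> j y}"

definition Vn :: "real \<Rightarrow> nat \<Rightarrow> (nat \<Rightarrow> complex) \<Rightarrow> nat \<Rightarrow> complex set" where
  "Vn L N \<nu> n = \<Union> {psiw L \<nu> w ` ess_fixpts L N \<nu> | w. length w = n \<and> set w \<subseteq> {1..N}}"

definition bisector_refl :: "complex \<Rightarrow> complex \<Rightarrow> complex \<Rightarrow> complex" where
  "bisector_refl x y z =
     z - (2 * ((z - (x + y) / 2) \<bullet> (y - x)) / ((y - x) \<bullet> (y - x))) *\<^sub>R (y - x)"

definition simple_nested_fractal ::
  "real \<Rightarrow> nat \<Rightarrow> (nat \<Rightarrow> complex) \<Rightarrow> complex set \<Rightarrow> bool" where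
  "simple_nested_fractal L N \<nu> K \<longleftrightarrow>
     L > 1 \<and> N \<ge> 2 \<and> \<nu> 1 = 0 \<and>
     \<comment> \<open>K is the self-similar set (attractor) of the IFS\<close>
     compact K \<and> K \<noteq> {} \<and> K = (\<Union>i\<in>{1..N}. psi L \<nu> i ` K) \<and>
     \<comment> \<open>at least two essential fixed points\<close>
     card (ess_fixpts L N \<nu>) \<ge> 2 \<and>
     \<comment> \<open>open set condition\<close>
     (\<exists>U. open U \<and> bounded U \<and> U \<noteq> {} \<and> (\<forall>i\<in>{1..N}. psi L \<nu> i ` U \<subseteq> U) \<and>
        (\<forall>i\<in>{1..N}. \<forall>j\<in>{1..N}. i \<noteq> j \<longrightarrow> psi L \<nu> i ` U \<inter> psi L \<nu> j ` U = {})) \<and>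
     \<comment> \<open>nesting\<close>
     (\<forall>w w'. length w = length w' \<and> set w \<subseteq> {1..N} \<and> set w' \<subseteq> {1..N} \<and> w \<noteq> w' \<longrightarrow>
        psiw L \<nu> w ` K \<inter> psiw L \<nu> w' ` K =
        psiw L \<nu> w ` ess_fixpts L N \<nu> \<inter> psiw L \<nu> w' ` ess_fixpts L N \<nu>) \<and>
     \<comment> \<open>symmetry\<close>
     (\<forall>x\<in>ess_fixpts L N \<nu>. \<forall>y\<in>ess_fixpts L N \<nu>. x \<noteq> y \<longrightarrow>
        (\<forall>n. bisector_refl x y ` Vn L N \<nu> n = Vn L N \<nu> n)) \<and>
     \<comment> \<open>connectivity: the graph of 1-cells (adjacent iff intersecting) is connected\<close>
     (\<forall>i\<in>{1..N}. \<forall>j\<in>{1..N}. (i, j) \<in>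
        {(a, b). a \<in> {1..N} \<and> b \<in> {1..N} \<and> psi L \<nu> a ` K \<inter> psi L \<nu> b ` K \<noteq> {}}\<^sup>*)"

definition regular_polygon :: "complex set \<Rightarrow> nat \<Rightarrow> bool" where
  "regular_polygon V k \<longleftrightarrow>
     (\<exists>c r \<theta>. r > 0 \<and> V = (\<lambda>j. c + of_real r * cis (\<theta> + 2 * pi * real j / real k)) ` {..<k})"

definition complex_shifts :: "real \<Rightarrow> nat \<Rightarrow> (nat \<Rightarrow> complex) \<Rightarrow> int \<Rightarrow> complex set" where
  "complex_shifts L N \<nu> M =
     {(\<Sum>j\<in>{M+1..J}. of_real (L powi j) * \<nu> (idx j)) | idx J.
        J \<ge> M + 1 \<and> (\<forall>j\<in>{M+1..J}. idx j \<in> {1..N})}"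

definition VMM :: "real \<Rightarrow> nat \<Rightarrow> (nat \<Rightarrow> complex) \<Rightarrow> int \<Rightarrow> complex set" where
  "VMM L N \<nu> M = (\<lambda>v. of_real (L powi M) * v) ` ess_fixpts L N \<nu>"

definition VMinf :: "real \<Rightarrow> nat \<Rightarrow> (nat \<Rightarrow> complex) \<Rightarrow> int \<Rightarrow> complex set" where
  "VMinf L N \<nu> M = (\<Union>s\<in>complex_shifts L N \<nu> M. (\<lambda>v. v + s) ` VMM L N \<nu> M)"

text \<open>Barycenter of K^<M> (= barycenter of the regular polygon spanned by V_M^<M>).\<close>
definition bary :: "real \<Rightarrow> nat \<Rightarrow> (nat \<Rightarrow> complex) \<Rightarrow> int \<Rightarrow> complex" where
  "bary L N \<nu> M = (\<Sum>v\<in>VMM L N \<nu> M. v) / of_nat (card (VMM L N \<nu> M))"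

definition rotations :: "real \<Rightarrow> nat \<Rightarrow> (nat \<Rightarrow> complex) \<Rightarrow> int \<Rightarrow> (complex \<Rightarrow> complex) set" where
  "rotations L N \<nu> M = {\<rho>. \<exists>\<omega>. norm \<omega> = 1 \<and>
      \<rho> = (\<lambda>x. bary L N \<nu> M + \<omega> * (x - bary L N \<nu> M)) \<and> \<rho> ` VMM L N \<nu> M = VMM L N \<nu> M}"

definition good_labelling ::
  "real \<Rightarrow> nat \<Rightarrow> (nat \<Rightarrow> complex) \<Rightarrow> 'a set \<Rightarrow> int \<Rightarrow> (complex \<Rightarrow> 'a) \<Rightarrow> bool" where
  "good_labelling L N \<nu> A M lab \<longleftrightarrow>
     lab ` VMinf L N \<nu> M \<subseteq> A \<and> bij_betw lab (VMM L N \<nu> M) A \<and>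
     (\<forall>s\<in>complex_shifts L N \<nu> M. \<exists>R\<in>rotations L N \<nu> M.
        \<forall>v\<in>(\<lambda>u. u + s) ` VMM L N \<nu> M. lab v = lab (R (v - s)))"

text \<open>Good labelling property; the alphabet is any set of k = #V_0 symbols (here natural numbers).\<close>
definition good_labelling_property :: "real \<Rightarrow> nat \<Rightarrow> (nat \<Rightarrow> complex) \<Rightarrow> bool" where
  "good_labelling_property L N \<nu> \<longleftrightarrow>
     (\<exists>(A::nat set) (M::int) lab. finite A \<and> card A = card (ess_fixpts L N \<nu>) \<and>
        good_labelling L N \<nu> A M lab)"

end

theory Submission
  imports Defs
begin

text \<open>Write the essential fixed points as \<open>c + \<rho> w\<close> with \<open>w\<close> a fourth root of unity. By nesting, two
  distinct 1-cells can only touch at images of equal or opposite vertices \<open>p\<close>, \<open>q\<close>, so that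
  \<open>(p - q) / \<rho> \<in> 2\<int>[\<i>]\<close>. Following the connectivity graph of the 1-cells from \<open>\<nu>\<^sub>1 = 0\<close> this gives
  \<open>L \<nu>\<^sub>m / \<rho> \<in> 2\<int>[\<i>]\<close> for every \<open>m\<close>, and in particular \<open>L \<in> \<int>\<close>. Hence every translation vector
  \<open>s = \<Sum>\<^sub>j L\<^sup>j \<nu>(i\<^sub>j)\<close> of a 0-complex has \<open>s / \<rho> \<in> 2\<int>[\<i>]\<close>, and a labelling of \<open>\<int>[\<i>]\<close> that is invariant under
  \<open>2\<int>[\<i>]\<close> up to the half-turn gives a good labelling of order 0.\<close>

definition fourth_roots :: "complex set" where
  "fourth_roots = {1, \<i>, -1, -\<i>}"

lemma finite_fourth_roots [simp]: "finite fourth_roots"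
  by (simp add: fourth_roots_def)

lemma card_fourth_roots: "card fourth_roots = 4"
  by (simp add: fourth_roots_def complex_eq_iff)

lemma sum_fourth_roots: "(\<Sum>w\<in>fourth_roots. w) = 0"
  by (simp add: fourth_roots_def complex_eq_iff)

lemma norm_fourth_roots: "w \<in> fourth_roots \<Longrightarrow> norm w = 1"
  by (auto simp: fourth_roots_def)

lemma image_mult_fourth_roots:
  assumes "\<omega> \<in> fourth_roots"
  shows "(\<lambda>w. \<omega> * w) ` fourth_roots = fourth_roots"
  using assms by (auto simp: fourth_roots_def insert_commute)

lemma fourth_roots_quotient:
  "w \<in> fourth_roots \<Longrightarrow> w' \<in> fourth_roots \<Longrightarrow> \<exists>\<sigma>\<in>fourth_roots. w = \<sigma> * w'"
  by (auto simp: fourth_roots_def)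

lemma regular_polygon_4_eq_square:
  assumes "regular_polygon V 4"
  obtains c \<rho> where "\<rho> \<noteq> 0" "V = (\<lambda>w. c + \<rho> * w) ` fourth_roots"
proof -
  obtain c r \<theta> where r: "r > 0"
    and V: "V = (\<lambda>j. c + of_real r * cis (\<theta> + 2 * pi * real j / real 4)) ` {..<4}"
    using assms unfolding regular_polygon_def by blast
  have "cis (\<theta> + 2 * pi * real j / real 4) = cis \<theta> * \<i> ^ j" for j
  proof -
    have "\<theta> + 2 * pi * real j / real 4 = \<theta> + real j * (pi / 2)" by simp
    then show ?thesis by (simp only: cis_mult[symmetric] Complex.DeMoivre[symmetric] cis_pi_half)
  qed
  then have "V = (\<lambda>w. c + of_real r * cis \<theta> * w) ` ((\<lambda>j. \<i> ^ j) ` {..<4})"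
    unfolding V image_image by (simp add: mult.assoc)
  also have "(\<lambda>j. \<i> ^ j) ` {..<4} = fourth_roots"
  proof -
    have "{..<4::nat} = {0, 1, 2, 3}" by auto
    then show ?thesis by (auto simp: fourth_roots_def power3_eq_cube)
  qed
  finally show ?thesis
    using r that[of "of_real r * cis \<theta>"] by simp
qed

lemma psi_eq_psi_iff [simp]: "L \<noteq> 0 \<Longrightarrow> psi L \<nu> i x = psi L \<nu> i y \<longleftrightarrow> x = y"
  by (simp add: psi_def)

lemma psi_fixed_iff: "L \<noteq> 0 \<Longrightarrow> psi L \<nu> i x = x \<longleftrightarrow> \<nu> i = x - x / of_real L"
  by (auto simp: psi_def algebra_simps)

lemma dist_psi: "L > 0 \<Longrightarrow> dist (psi L \<nu> i x) (psi L \<nu> i y) = dist x y / L"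
  by (simp add: psi_def dist_norm diff_divide_distrib[symmetric] norm_divide)

lemma psi_fixpoint_mem:
  assumes L: "L > 1" and K: "closed K" "K \<noteq> {}" "psi L \<nu> i ` K \<subseteq> K"
    and x: "psi L \<nu> i x = x"
  shows "x \<in> K"
proof -
  have "\<exists>!y\<in>K. psi L \<nu> i y = y"
    using L K by (intro Banach_fix[of K "1 / L"]) (auto simp: complete_eq_closed dist_psi)
  then obtain y where y: "y \<in> K" "psi L \<nu> i y = y" by blast
  have "dist x y = dist x y / L"
    using dist_psi[of L \<nu> i x y] L x y(2) by simp
  then have "x = y" using L by (simp add: field_simps)
  with y show ?thesis by simp
qed

lemma simple_nested_fractalD:
  assumes "simple_nested_fractal L N \<nu> K"
  shows "L > 1" and "\<nu> 1 = 0" and "1 \<le> N" and "closed K" and "K \<noteq> {}"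
    and "i \<in> {1..N} \<Longrightarrow> psi L \<nu> i ` K \<subseteq> K"
    and "a \<in> {1..N} \<Longrightarrow> b \<in> {1..N} \<Longrightarrow> a \<noteq> b \<Longrightarrow>
      psi L \<nu> a ` K \<inter> psi L \<nu> b ` K = psi L \<nu> a ` ess_fixpts L N \<nu> \<inter> psi L \<nu> b ` ess_fixpts L N \<nu>"
    and "i \<in> {1..N} \<Longrightarrow> j \<in> {1..N} \<Longrightarrow> (i, j) \<in>
      {(a, b). a \<in> {1..N} \<and> b \<in> {1..N} \<and> psi L \<nu> a ` K \<inter> psi L \<nu> b ` K \<noteq> {}}\<^sup>*"
proof -
  note snf = assms[unfolded simple_nested_fractal_def]
  show "L > 1" using snf by (elim conjE)
  show "\<nu> 1 = 0" using snf by (elim conjE)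
  show "K \<noteq> {}" using snf by (elim conjE)
  show "1 \<le> N"
    using snf by (elim conjE) linarith
  show "closed K"
    using snf by (elim conjE) (rule compact_imp_closed)
  have "K = (\<Union>i\<in>{1..N}. psi L \<nu> i ` K)"
    using snf by (elim conjE) assumption
  then show "i \<in> {1..N} \<Longrightarrow> psi L \<nu> i ` K \<subseteq> K"
    by blast
  show "a \<in> {1..N} \<Longrightarrow> b \<in> {1..N} \<Longrightarrow> a \<noteq> b \<Longrightarrow>
      psi L \<nu> a ` K \<inter> psi L \<nu> b ` K = psi L \<nu> a ` ess_fixpts L N \<nu> \<inter> psi L \<nu> b ` ess_fixpts L N \<nu>"
    using snf by (elim conjE) (drule spec[of _ "[a]"], drule spec[of _ "[b]"], simp add: image_comp)
  show "i \<in> {1..N} \<Longrightarrow> j \<in> {1..N} \<Longrightarrow> (i, j) \<in>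
      {(a, b). a \<in> {1..N} \<and> b \<in> {1..N} \<and> psi L \<nu> a ` K \<inter> psi L \<nu> b ` K \<noteq> {}}\<^sup>*"
    using snf by (elim conjE) (simp only: Ball_def)
qed

lemma ess_fixpts_subset:
  assumes "simple_nested_fractal L N \<nu> K"
  shows "ess_fixpts L N \<nu> \<subseteq> K"
proof
  fix x assume "x \<in> ess_fixpts L N \<nu>"
  then obtain i where "i \<in> {1..N}" "psi L \<nu> i x = x"
    unfolding ess_fixpts_def fixpts_def by blast
  then show "x \<in> K"
    using psi_fixpoint_mem simple_nested_fractalD[OF assms] by metis
qed

definition even_gaussian :: "complex \<Rightarrow> bool" where
  "even_gaussian z \<longleftrightarrow> (\<exists>a::int. Re z = 2 * of_int a) \<and> (\<exists>b::int. Im z = 2 * of_int b)"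

lemma even_gaussian_0 [simp]: "even_gaussian 0"
  unfolding even_gaussian_def by (auto intro: exI[of _ 0])

lemma even_gaussian_add: "even_gaussian x \<Longrightarrow> even_gaussian y \<Longrightarrow> even_gaussian (x + y)"
  unfolding even_gaussian_def by (auto intro!: exI[of _ "_ + _"])

lemma even_gaussian_diff: "even_gaussian x \<Longrightarrow> even_gaussian y \<Longrightarrow> even_gaussian (x - y)"
  unfolding even_gaussian_def by (auto intro!: exI[of _ "_ - _"])

lemma even_gaussian_mult_Ints:
  assumes "r \<in> \<int>" "even_gaussian x"
  shows "even_gaussian (of_real r * x)"
proof -
  obtain k where "r = of_int k" using assms(1) by (rule Ints_cases)
  with assms(2) show ?thesis
    unfolding even_gaussian_def by (auto intro!: exI[of _ "k * _"])
qed

lemma even_gaussian_sum: "(\<And>x. x \<in> S \<Longrightarrow> even_gaussian (f x)) \<Longrightarrow> even_gaussian (sum f S)"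
  by (induction S rule: infinite_finite_induct) (simp_all add: even_gaussian_add)

lemma even_gaussian_fourth_roots:
  "w \<in> fourth_roots \<Longrightarrow> \<sigma> \<in> {1, -1} \<Longrightarrow> even_gaussian ((\<sigma> - 1) * w)"
  unfolding even_gaussian_def fourth_roots_def
  by (auto intro: exI[of _ 0] exI[of _ 1] exI[of _ "-1"])

text \<open>The parity of \<open>\<lfloor>Re z\<rfloor>\<close> separates \<open>\<plusminus>1\<close> from \<open>\<plusminus>\<i>\<close>, and \<open>(\<lfloor>Re z\<rfloor> + \<lfloor>Im z\<rfloor>) mod 4\<close> separates
  \<open>w\<close> from \<open>-w\<close>; a shift in \<open>2\<int>[\<i>]\<close> keeps the former and keeps or swaps the latter.\<close>
definition square_label :: "complex \<Rightarrow> nat" where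
  "square_label z = (if even \<lfloor>Re z\<rfloor> then 1 else 0) + (if (\<lfloor>Re z\<rfloor> + \<lfloor>Im z\<rfloor>) mod 4 = 3 then 2 else 0)"

lemma square_label_range: "square_label z \<in> {0, 1, 2, 3}"
  by (simp add: square_label_def)

lemma floor_minus_one: "\<lfloor>- 1 :: real\<rfloor> = - 1"
  by linarith

lemma bij_betw_square_label: "bij_betw square_label fourth_roots {0, 1, 2, 3}"
proof -
  have labels: "square_label 1 = 0" "square_label \<i> = 1" "square_label (-1) = 2" "square_label (-\<i>) = 3"
    by (simp_all add: square_label_def floor_minus_one)
  then have image: "square_label ` fourth_roots = {0, 1, 2, 3}"
    by (auto simp: fourth_roots_def)
  then have "inj_on square_label fourth_roots"
    by (simp add: inj_on_iff_eq_card card_fourth_roots)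
  with image show ?thesis
    by (simp add: bij_betw_def)
qed

lemma square_label_shift:
  assumes "even_gaussian g"
  shows "\<exists>\<omega>\<in>{1, -1}. \<forall>w\<in>fourth_roots. square_label (w + g) = square_label (\<omega> * w)"
proof -
  obtain A B :: int where AB: "Re g = of_int (2 * A)" "Im g = of_int (2 * B)"
    using assms unfolding even_gaussian_def by auto
  have floors: "\<lfloor>Re g\<rfloor> = 2 * A" "\<lfloor>Im g\<rfloor> = 2 * B"
    unfolding AB by (rule floor_of_int)+
  consider "even (A + B)" | "odd (A + B)" by blast
  then show ?thesis
  proof cases
    case 1
    then have "(2 * A + 2 * B) mod 4 = 0" by presburger
    then have "square_label (w + g) = square_label w" if "w \<in> fourth_roots" for w
      using that unfolding fourth_roots_def
      by (auto simp: square_label_def floors floor_minus_one; presburger)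
    then show ?thesis by (intro bexI[of _ 1]) auto
  next
    case 2
    then have "(2 * A + 2 * B) mod 4 = 2" by presburger
    then have "square_label (w + g) = square_label (- w)" if "w \<in> fourth_roots" for w
      using that unfolding fourth_roots_def
      by (auto simp: square_label_def floors floor_minus_one; presburger)
    then show ?thesis by (intro bexI[of _ "-1"]) auto
  qed
qed

lemma norm_convex_comb_quarter_turn_lt_1:
  assumes "0 < t" "t < 1" "\<sigma> \<in> {\<i>, -\<i>}"
  shows "norm (\<sigma> * of_real (1 - t) - of_real t) < 1"
proof -
  have "norm (\<sigma> * of_real (1 - t) - of_real t) = sqrt (t\<^sup>2 + (1 - t)\<^sup>2)"
    using assms(3) by (auto simp: cmod_def power2_commute)
  also have "\<dots> < 1"
    using assms(1,2) by (simp add: power2_eq_square algebra_simps)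
  finally show ?thesis .
qed

locale square_nested_fractal =
  fixes L :: real and N :: nat and \<nu> :: "nat \<Rightarrow> complex" and K :: "complex set"
    and c \<rho> :: complex
  assumes fractal: "simple_nested_fractal L N \<nu> K"
    and vertices: "ess_fixpts L N \<nu> = (\<lambda>w. c + \<rho> * w) ` fourth_roots"
    and rho_nonzero: "\<rho> \<noteq> 0"
begin

abbreviation "V \<equiv> ess_fixpts L N \<nu>"

lemmas L_gt_1 = simple_nested_fractalD(1)[OF fractal]

lemma of_real_L_nonzero: "(of_real L :: complex) \<noteq> 0"
  using L_gt_1 by simp

lemma fixing_map_of_vertex:
  assumes "w \<in> fourth_roots"
  obtains m where "m \<in> {1..N}" "\<nu> m = (c + \<rho> * w) - (c + \<rho> * w) / of_real L"
proof -
  have "c + \<rho> * w \<in> V" using assms vertices by blast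
  then obtain m where "m \<in> {1..N}" "psi L \<nu> m (c + \<rho> * w) = c + \<rho> * w"
    unfolding ess_fixpts_def fixpts_def by blast
  with L_gt_1 show ?thesis using that by (simp add: psi_fixed_iff)
qed

text \<open>Suppose \<open>\<psi>\<^sub>a p = \<psi>\<^sub>b q\<close> for adjacent vertices \<open>p\<close>, \<open>q\<close>. Let \<open>p'\<close>, \<open>q'\<close> be the vertices opposite
  to \<open>q\<close>, \<open>p\<close>, and \<open>m\<^sub>p\<close>, \<open>m\<^sub>q\<close> the maps fixing \<open>p\<close>, \<open>q\<close>. Then the point
  \<open>\<psi>\<^sub>a \<psi>\<^sub>m\<^sub>p p' = \<psi>\<^sub>b \<psi>\<^sub>m\<^sub>q q'\<close> lies in both 1-cells, but \<open>\<psi>\<^sub>m\<^sub>p p'\<close> lies strictly inside the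
  square \<open>V\<close>, so it is not a vertex, contradicting nesting.\<close>
lemma no_adjacent_contact:
  assumes ab: "a \<in> {1..N}" "b \<in> {1..N}" "a \<noteq> b"
    and w: "w \<in> fourth_roots" and \<sigma>: "\<sigma> \<in> {\<i>, -\<i>}"
  shows "psi L \<nu> a (c + \<rho> * (\<sigma> * w)) \<noteq> psi L \<nu> b (c + \<rho> * w)"
proof
  assume contact: "psi L \<nu> a (c + \<rho> * (\<sigma> * w)) = psi L \<nu> b (c + \<rho> * w)"
  define p q p' q' where "p = c + \<rho> * (\<sigma> * w)" and "q = c + \<rho> * w"
    and "p' = c + \<rho> * (- w)" and "q' = c + \<rho> * (- (\<sigma> * w))"
  have roots: "\<sigma> * w \<in> fourth_roots" "- w \<in> fourth_roots" "- (\<sigma> * w) \<in> fourth_roots"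
    using w \<sigma> by (auto simp: fourth_roots_def)
  obtain mp where mp: "mp \<in> {1..N}" "\<nu> mp = p - p / of_real L"
    using fixing_map_of_vertex[OF roots(1)] unfolding p_def by blast
  obtain mq where mq: "mq \<in> {1..N}" "\<nu> mq = q - q / of_real L"
    using fixing_map_of_vertex[OF w] unfolding q_def by blast
  define y where "y = psi L \<nu> mp p'"
  have "p' \<in> K" "q' \<in> K"
    using roots ess_fixpts_subset[OF fractal] vertices unfolding p'_def q'_def by blast+
  then have "y \<in> K" "psi L \<nu> mq q' \<in> K"
    using simple_nested_fractalD(6)[OF fractal] mp(1) mq(1) unfolding y_def by blast+
  moreover have "psi L \<nu> a y = psi L \<nu> b (psi L \<nu> mq q')"
  proof -
    have "\<rho> * (\<sigma> * w) + of_real L * \<nu> a = \<rho> * w + of_real L * \<nu> b"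
      using contact of_real_L_nonzero unfolding psi_def by (simp add: field_simps)
    then have "of_real L * of_real L * (\<rho> * (\<sigma> * w) + of_real L * \<nu> a) =
        of_real L * of_real L * (\<rho> * w + of_real L * \<nu> b)"
      by simp
    then show ?thesis
      using of_real_L_nonzero
      unfolding y_def psi_def mp(2) mq(2) p_def q_def p'_def q'_def
      by (simp add: field_simps)
  qed
  ultimately have "psi L \<nu> a y \<in> psi L \<nu> a ` V"
    using simple_nested_fractalD(7)[OF fractal ab] by blast
  then have "y \<in> V"
    using L_gt_1 by auto
  then obtain w' where w': "w' \<in> fourth_roots" "y = c + \<rho> * w'"
    using vertices by blast
  have "y - c = \<rho> * (w * (\<sigma> * of_real (1 - 1 / L) - of_real (1 / L)))"
    using of_real_L_nonzero unfolding y_def psi_def mp(2) p_def p'_def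
    by (simp add: field_simps)
  then have "w' = w * (\<sigma> * of_real (1 - 1 / L) - of_real (1 / L))"
    using w'(2) rho_nonzero by simp
  then have "norm w' = norm w * norm (\<sigma> * of_real (1 - 1 / L) - of_real (1 / L))"
    by (simp add: norm_mult)
  moreover have "norm (\<sigma> * of_real (1 - 1 / L) - of_real (1 / L)) < 1"
    using L_gt_1 \<sigma> by (intro norm_convex_comb_quarter_turn_lt_1) auto
  ultimately show False
    using norm_fourth_roots w w'(1) by simp
qed

lemma even_gaussian_contact_diff:
  assumes ab: "a \<in> {1..N}" "b \<in> {1..N}" and pq: "p \<in> V" "q \<in> V"
    and contact: "psi L \<nu> a p = psi L \<nu> b q"
  shows "even_gaussian ((p - q) / \<rho>)"
proof (cases "a = b")
  case True
  with contact L_gt_1 show ?thesis by simp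
next
  case False
  obtain wp wq where w: "wp \<in> fourth_roots" "wq \<in> fourth_roots" "p = c + \<rho> * wp" "q = c + \<rho> * wq"
    using pq vertices by blast
  then obtain \<sigma> where \<sigma>: "\<sigma> \<in> fourth_roots" "wp = \<sigma> * wq"
    using fourth_roots_quotient by blast
  have "\<sigma> \<notin> {\<i>, -\<i>}"
    using no_adjacent_contact[OF ab False w(2)] contact w(3,4) \<sigma>(2) by blast
  then have "\<sigma> \<in> {1, -1}"
    using \<sigma>(1) by (auto simp: fourth_roots_def)
  moreover have "(p - q) / \<rho> = (\<sigma> - 1) * wq"
    using w \<sigma> rho_nonzero by (simp add: field_simps)
  ultimately show ?thesis
    using even_gaussian_fourth_roots w(2) by simp
qed

lemma even_gaussian_L_nu:
  assumes m: "m \<in> {1..N}"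
  shows "even_gaussian (of_real L * \<nu> m / \<rho>)"
proof -
  have "(1, m) \<in> {(a, b). a \<in> {1..N} \<and> b \<in> {1..N} \<and> psi L \<nu> a ` K \<inter> psi L \<nu> b ` K \<noteq> {}}\<^sup>*"
    using simple_nested_fractalD(3)[OF fractal] m by (intro simple_nested_fractalD(8)[OF fractal]) auto
  then show ?thesis
  proof (induction rule: rtrancl_induct)
    case base
    show ?case using simple_nested_fractalD(2)[OF fractal] by simp
  next
    case (step y z)
    from step.hyps(2) have yz: "y \<in> {1..N}" "z \<in> {1..N}" "psi L \<nu> y ` K \<inter> psi L \<nu> z ` K \<noteq> {}"
      by (simp_all only: mem_Collect_eq case_prod_conv simp_thms)
    show ?case
    proof (cases "y = z")
      case True
      with step.IH show ?thesis by simp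
    next
      case False
      have "psi L \<nu> y ` V \<inter> psi L \<nu> z ` V \<noteq> {}"
        using simple_nested_fractalD(7)[OF fractal yz(1,2) False] yz(3) by simp
      then obtain p q where pq: "p \<in> V" "q \<in> V" "psi L \<nu> y p = psi L \<nu> z q"
        by blast
      then have "of_real L * \<nu> z = of_real L * \<nu> y + (p - q)"
        using of_real_L_nonzero by (simp add: psi_def field_simps)
      then have "of_real L * \<nu> z / \<rho> = of_real L * \<nu> y / \<rho> + (p - q) / \<rho>"
        by (simp add: add_divide_distrib)
      then show ?thesis
        using step.IH even_gaussian_contact_diff[OF yz(1,2) pq] by (simp add: even_gaussian_add)
    qed
  qed
qed

lemma L_in_Ints: "L \<in> \<int>"
proof -
  have roots: "1 \<in> fourth_roots" "-1 \<in> fourth_roots"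
    by (simp_all add: fourth_roots_def)
  obtain m1 m2 where m: "m1 \<in> {1..N}" "\<nu> m1 = (c + \<rho> * 1) - (c + \<rho> * 1) / of_real L"
    "m2 \<in> {1..N}" "\<nu> m2 = (c + \<rho> * -1) - (c + \<rho> * -1) / of_real L"
    using fixing_map_of_vertex[OF roots(1)] fixing_map_of_vertex[OF roots(2)] by metis
  have "of_real L * \<nu> m1 / \<rho> - of_real L * \<nu> m2 / \<rho> = of_real (2 * (L - 1))"
    using of_real_L_nonzero rho_nonzero unfolding m(2,4) by (simp add: field_simps)
  moreover have "even_gaussian (of_real L * \<nu> m1 / \<rho> - of_real L * \<nu> m2 / \<rho>)"
    using even_gaussian_L_nu[OF m(1)] even_gaussian_L_nu[OF m(3)] by (rule even_gaussian_diff)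
  ultimately obtain k :: int where "2 * (L - 1) = 2 * of_int k"
    unfolding even_gaussian_def by auto
  then have "L = of_int (k + 1)" by simp
  then show ?thesis by simp
qed

lemma even_gaussian_complex_shift:
  assumes "s \<in> complex_shifts L N \<nu> 0"
  shows "even_gaussian (s / \<rho>)"
proof -
  obtain idx J where s: "s = (\<Sum>j\<in>{1..J}. of_real (L powi j) * \<nu> (idx j))"
    and idx: "\<forall>j\<in>{1..J}. idx j \<in> {1..N}"
    using assms unfolding complex_shifts_def by auto
  have "even_gaussian (of_real (L powi j) * \<nu> (idx j) / \<rho>)" if j: "j \<in> {1..J}" for j
  proof -
    have "L powi j = L ^ (nat j - 1) * L"
      using j by (simp add: power_int_def power_Suc2[symmetric])
    then have "of_real (L powi j) * \<nu> (idx j) / \<rho> = of_real (L ^ (nat j - 1)) * (of_real L * \<nu> (idx j) / \<rho>)"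
      by simp
    moreover have "even_gaussian (of_real (L ^ (nat j - 1)) * (of_real L * \<nu> (idx j) / \<rho>))"
      using L_in_Ints idx j by (intro even_gaussian_mult_Ints even_gaussian_L_nu) auto
    ultimately show ?thesis
      by metis
  qed
  then show ?thesis
    unfolding s sum_divide_distrib by (rule even_gaussian_sum)
qed

lemma VMM_0: "VMM L N \<nu> 0 = V"
  by (simp add: VMM_def)

lemma bary_0: "bary L N \<nu> 0 = c"
proof -
  have inj: "inj_on (\<lambda>w. c + \<rho> * w) fourth_roots"
    using rho_nonzero by (auto simp: inj_on_def)
  have "(\<Sum>v\<in>V. v) = (\<Sum>w\<in>fourth_roots. c + \<rho> * w)"
    unfolding vertices by (rule sum.reindex[OF inj, unfolded comp_def])
  also have "\<dots> = of_nat (card fourth_roots) * c + \<rho> * (\<Sum>w\<in>fourth_roots. w)"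
    by (simp add: sum.distrib sum_distrib_left)
  also have "\<dots> = 4 * c"
    by (simp add: card_fourth_roots sum_fourth_roots)
  finally show ?thesis
    unfolding bary_def VMM_0 vertices card_image[OF inj] card_fourth_roots by simp
qed

lemma rotation_mem_rotations:
  assumes "\<omega> \<in> fourth_roots"
  shows "(\<lambda>x. c + \<omega> * (x - c)) \<in> rotations L N \<nu> 0"
proof -
  have "(\<lambda>x. c + \<omega> * (x - c)) ` V = (\<lambda>w. c + \<rho> * w) ` ((\<lambda>w. \<omega> * w) ` fourth_roots)"
    unfolding vertices image_image by (simp add: algebra_simps)
  then have "(\<lambda>x. c + \<omega> * (x - c)) ` V = V"
    unfolding image_mult_fourth_roots[OF assms] vertices .
  then show ?thesis
    using norm_fourth_roots[OF assms] unfolding rotations_def VMM_0 bary_0 by blast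
qed

lemma good_labelling_order_0:
  "good_labelling L N \<nu> {0, 1, 2, 3} 0 (\<lambda>x. square_label ((x - c) / \<rho>))"
  unfolding good_labelling_def
proof (intro conjI ballI)
  show "(\<lambda>x. square_label ((x - c) / \<rho>)) ` VMinf L N \<nu> 0 \<subseteq> {0, 1, 2, 3}"
    unfolding image_subset_iff using square_label_range by (rule allI ballI)
  have "bij_betw (\<lambda>x. (x - c) / \<rho>) V fourth_roots"
    unfolding vertices using rho_nonzero
    by (intro bij_betw_imageI) (auto simp: inj_on_def image_image)
  then show "bij_betw (\<lambda>x. square_label ((x - c) / \<rho>)) (VMM L N \<nu> 0) {0, 1, 2, 3}"
    unfolding VMM_0 using bij_betw_trans[OF _ bij_betw_square_label] by (simp add: comp_def)
next
  fix s assume s: "s \<in> complex_shifts L N \<nu> 0"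
  obtain \<omega> where \<omega>: "\<omega> \<in> {1, -1}"
    and shift: "\<forall>w\<in>fourth_roots. square_label (w + s / \<rho>) = square_label (\<omega> * w)"
    using square_label_shift[OF even_gaussian_complex_shift[OF s]] by blast
  have rotation: "(\<lambda>x. c + \<omega> * (x - c)) \<in> rotations L N \<nu> 0"
    using \<omega> by (intro rotation_mem_rotations) (auto simp: fourth_roots_def)
  show "\<exists>R\<in>rotations L N \<nu> 0. \<forall>v\<in>(\<lambda>u. u + s) ` VMM L N \<nu> 0.
      square_label ((v - c) / \<rho>) = square_label ((R (v - s) - c) / \<rho>)"
  proof (rule bexI[OF _ rotation], intro ballI)
    fix v assume "v \<in> (\<lambda>u. u + s) ` VMM L N \<nu> 0"
    then obtain w where w: "w \<in> fourth_roots" "v = c + \<rho> * w + s"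
      unfolding VMM_0 vertices by auto
    have "(v - c) / \<rho> = w + s / \<rho>"
      using w(2) rho_nonzero by (simp add: field_simps)
    moreover have "(c + \<omega> * (v - s - c) - c) / \<rho> = \<omega> * w"
      using w(2) rho_nonzero by (simp add: field_simps)
    ultimately show "square_label ((v - c) / \<rho>) = square_label ((c + \<omega> * (v - s - c) - c) / \<rho>)"
      using shift w(1) by simp
  qed
qed

end

theorem corollary3p16:
  fixes L :: real and N :: nat and \<nu> :: "nat \<Rightarrow> complex" and K :: "complex set"
  assumes "simple_nested_fractal L N \<nu> K"
    and "regular_polygon (ess_fixpts L N \<nu>) (card (ess_fixpts L N \<nu>))"
    and "card (ess_fixpts L N \<nu>) = 4"
  shows "good_labelling_property L N \<nu>"
proof -
  obtain c \<rho> where "\<rho> \<noteq> 0" "ess_fixpts L N \<nu> = (\<lambda>w. c + \<rho> * w) ` fourth_roots"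
    using regular_polygon_4_eq_square assms(2,3) by metis
  then interpret square_nested_fractal L N \<nu> K c \<rho>
    using assms(1) by unfold_locales
  have "card {0, 1, 2, 3 :: nat} = card (ess_fixpts L N \<nu>)"
    using assms(3) by simp
  with good_labelling_order_0 show ?thesis
    unfolding good_labelling_property_def by (intro exI[of _ "{0, 1, 2, 3}"] exI conjI) simp_all
qed

end
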